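(* Consider a cellular network with $n$ base stations $\mathcal{N}=\{1,\dots,n\}$, base station $i$ serving a nonempty set $\mathcal{J}_i$ of users (pairwise disjoint), channel gains $g_{kj}>0$, noise power $\sigma^2>0$, and for $\mathbf{p}>\mathbf{0}$, $\mathbf{x}\ge\mathbf{0}$, $\mathbf{r}>\mathbf{0}$, $$f_i(\mathbf{x};\mathbf{r},\mathbf{p})=\sum_{j\in\mathcal{J}_i}\frac{r_{ij}}{\log\Big(1+\frac{p_i g_{ij}}{\sum_{k\ne i} p_k g_{kj} x_k+\sigma^2}\Big)}.$$ Let $\mathbf{d}_{\min}>\mathbf{0}$ and consider Problem P0: $$\min_{\mathbf{p}>\mathbf{0},\ \mathbf{r}>\mathbf{0},\ \mathbf{0}<\mathbf{x}\le\mathbf{1}} \mathbf{x}^T\mathbf{p}\quad\text{s.t.}\quad \mathbf{x}=\mathbf{f}(\mathbf{x};\mathbf{r},\mathbf{p}),\quad \mathbf{r}\ge\mathbf{d}_{\min}.$$ Then the optimal solution $(\mathbf{p}^\star,\mathbf{r}^\star,\mathbf{x}^\star)$ of Problem P0 has load vector $\mathbf{x}^\star=\mathbf{1}$.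
   Context: Vector inequalities are componentwise; $\mathbf{1}$ is the all-ones vector; $\log$ is natural logarithm. *)

theory Defs
  imports Complex_Main
begin

text \<open>J i is the set of users served by base station i; g k j is the channel gain from
  base station k to user j; s2 is the noise power sigma^2; log is natural log (ln).\<close>

definition load_f ::
  "('n::finite \<Rightarrow> 'u set) \<Rightarrow> ('n \<Rightarrow> 'u \<Rightarrow> real) \<Rightarrow> real \<Rightarrow>
   ('n \<Rightarrow> real) \<Rightarrow> ('n \<Rightarrow> 'u \<Rightarrow> real) \<Rightarrow> ('n \<Rightarrow> real) \<Rightarrow> 'n \<Rightarrow> real" where
  "load_f J g s2 x r p i =
     (\<Sum>j\<in>J i. r i j /
        ln (1 + p i * g i j / ((\<Sum>k\<in>UNIV - {i}. p k * g k j * x k) + s2)))"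

definition P0_feasible ::
  "('n::finite \<Rightarrow> 'u set) \<Rightarrow> ('n \<Rightarrow> 'u \<Rightarrow> real) \<Rightarrow> real \<Rightarrow> ('n \<Rightarrow> 'u \<Rightarrow> real) \<Rightarrow>
   ('n \<Rightarrow> real) \<Rightarrow> ('n \<Rightarrow> 'u \<Rightarrow> real) \<Rightarrow> ('n \<Rightarrow> real) \<Rightarrow> bool" where
  "P0_feasible J g s2 dmin p r x \<longleftrightarrow>
     (\<forall>i. p i > 0) \<and>
     (\<forall>i. \<forall>j\<in>J i. r i j > 0) \<and>
     (\<forall>i. 0 < x i \<and> x i \<le> 1) \<and>
     (\<forall>i. x i = load_f J g s2 x r p i) \<and>
     (\<forall>i. \<forall>j\<in>J i. r i j \<ge> dmin i j)"

definition P0_objective :: "('n::finite \<Rightarrow> real) \<Rightarrow> ('n \<Rightarrow> real) \<Rightarrow> real" where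
  "P0_objective x p = (\<Sum>i\<in>UNIV. x i * p i)"

definition P0_optimal ::
  "('n::finite \<Rightarrow> 'u set) \<Rightarrow> ('n \<Rightarrow> 'u \<Rightarrow> real) \<Rightarrow> real \<Rightarrow> ('n \<Rightarrow> 'u \<Rightarrow> real) \<Rightarrow>
   ('n \<Rightarrow> real) \<Rightarrow> ('n \<Rightarrow> 'u \<Rightarrow> real) \<Rightarrow> ('n \<Rightarrow> real) \<Rightarrow> bool" where
  "P0_optimal J g s2 dmin p r x \<longleftrightarrow>
     P0_feasible J g s2 dmin p r x \<and>
     (\<forall>p' r' x'. P0_feasible J g s2 dmin p' r' x' \<longrightarrow>
        P0_objective x p \<le> P0_objective x' p')"

end

theory Submission
  imports Defs
begin

text \<open>If some load x_i is below 1, transmit with the average powers x_k p_k at full load: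
  the interference seen by every user is unchanged while each SINR is scaled by x_i.
  Since ln (1 + s) is strictly concave, the resulting loads A_i are at most 1, and strictly
  below 1 where x_i < 1.  Scaling the powers once more by A_i (which only lowers
  interference) keeps every load at most 1; rescaling the rates up to load exactly 1 gives a
  feasible point with x = 1 whose total power is strictly smaller than x^T p.\<close>

lemma ln_one_plus_concave_strict:
  fixes a s :: real
  assumes "0 < a" "a < 1" "0 < s"
  shows "a * ln (1 + s) < ln (1 + a * s)"
proof -
  define m where "m = 1 + a * s"
  have m: "1 < m" "1 + s \<noteq> m" using assms by (simp_all add: m_def)
  have "(1 - a) * (ln 1 - ln m) + a * (ln (1 + s) - ln m)
      < (1 - a) * ((1 - m) / m) + a * ((1 + s - m) / m)"
    using assms m by (intro add_strict_mono mult_strict_left_mono ln_diff_less) auto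
  also have "\<dots> = 0" using m by (simp add: m_def field_simps)
  finally show ?thesis by (simp add: m_def algebra_simps)
qed

lemma ln_one_plus_concave:
  fixes a s :: real
  assumes "0 < a" "a \<le> 1" "0 < s"
  shows "a * ln (1 + s) \<le> ln (1 + a * s)"
  using ln_one_plus_concave_strict[OF assms(1) _ assms(3)] assms by (cases "a = 1") auto

lemma divide_ln_one_plus_scaled_le:
  fixes a r s :: real
  assumes "0 < a" "a \<le> 1" "0 < s" "0 < r"
  shows "r / ln (1 + a * s) \<le> (r / ln (1 + s)) / a"
proof -
  have "0 < a * ln (1 + s)" using assms by simp
  then have "r / ln (1 + a * s) \<le> r / (a * ln (1 + s))"
    using assms ln_one_plus_concave[OF assms(1-3)] by (intro frac_le) auto
  then show ?thesis by (simp add: field_simps)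
qed

lemma divide_ln_one_plus_scaled_less:
  fixes a r s :: real
  assumes "0 < a" "a < 1" "0 < s" "0 < r"
  shows "r / ln (1 + a * s) < (r / ln (1 + s)) / a"
proof -
  have "0 < a * ln (1 + s)" using assms by simp
  then have "r / ln (1 + a * s) < r / (a * ln (1 + s))"
    using assms ln_one_plus_concave_strict[OF assms(1-3)] by (intro frac_less2) auto
  then show ?thesis by (simp add: field_simps)
qed

definition sinr :: "('n::finite \<Rightarrow> 'u \<Rightarrow> real) \<Rightarrow> real \<Rightarrow> ('n \<Rightarrow> real) \<Rightarrow> ('n \<Rightarrow> real) \<Rightarrow>
    'n \<Rightarrow> 'u \<Rightarrow> real" where
  "sinr g s2 x p i j = p i * g i j / ((\<Sum>k\<in>UNIV - {i}. p k * g k j * x k) + s2)"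

lemma load_f_sinr: "load_f J g s2 x r p i = (\<Sum>j\<in>J i. r i j / ln (1 + sinr g s2 x p i j))"
  by (simp add: load_f_def sinr_def)

lemma load_f_scale_rates:
  "load_f J g s2 x (\<lambda>i j. r i j / c i) p i = load_f J g s2 x r p i / c i"
  unfolding load_f_def sum_divide_distrib by (simp add: divide_divide_eq_left mult.commute)

lemma sinr_pos:
  assumes "\<And>k. 0 < p k" "\<And>k. 0 \<le> x k" "\<And>k. 0 < g k j" "0 < s2"
  shows "0 < sinr g s2 x p i j"
proof -
  have "0 \<le> (\<Sum>k\<in>UNIV - {i}. p k * g k j * x k)"
    using assms by (intro sum_nonneg) (simp add: less_imp_le)
  then show ?thesis using assms by (simp add: sinr_def)
qed

lemma sinr_full_load_average_power:
  "sinr g s2 (\<lambda>_. 1) (\<lambda>k. x k * p k) i j = x i * sinr g s2 x p i j"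
  by (simp add: sinr_def ac_simps)

lemma sinr_scale_power_ge:
  assumes "\<And>k. 0 \<le> c k" "\<And>k. c k \<le> 1" "\<And>k. 0 \<le> p k" "\<And>k. 0 \<le> x k"
    and "\<And>k. 0 \<le> g k j" "0 < s2"
  shows "c i * sinr g s2 x p i j \<le> sinr g s2 x (\<lambda>k. c k * p k) i j"
proof -
  define I where "I = (\<Sum>k\<in>UNIV - {i}. p k * g k j * x k) + s2"
  define I' where "I' = (\<Sum>k\<in>UNIV - {i}. c k * p k * g k j * x k) + s2"
  have "I' \<le> I"
    unfolding I_def I'_def using assms
    by (intro add_right_mono sum_mono mult_right_mono mult_left_le_one_le) auto
  moreover have "0 < I'"
    unfolding I'_def using assms by (intro add_nonneg_pos sum_nonneg) auto
  ultimately have "c i * p i * g i j / I \<le> c i * p i * g i j / I'"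
    using assms by (intro divide_left_mono) auto
  then show ?thesis by (simp add: sinr_def I_def I'_def)
qed

locale cellular_network =
  fixes J :: "'n::finite \<Rightarrow> 'u set" and g :: "'n \<Rightarrow> 'u \<Rightarrow> real" and s2 :: real
  assumes J_finite: "finite (J i)"
    and J_nonempty: "J i \<noteq> {}"
    and g_pos: "j \<in> J i \<Longrightarrow> 0 < g k j"
    and s2_pos: "0 < s2"
begin

lemma sinr_pos_served:
  assumes "j \<in> J i" "\<And>k. 0 < p k" "\<And>k. 0 \<le> x k"
  shows "0 < sinr g s2 x p i j"
  using assms by (intro sinr_pos g_pos s2_pos)

lemma load_f_pos:
  assumes "\<And>k. 0 < p k" "\<And>k. 0 \<le> x k" "\<And>j. j \<in> J i \<Longrightarrow> 0 < r i j"
  shows "0 < load_f J g s2 x r p i"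
  unfolding load_f_sinr
proof (intro sum_pos J_finite J_nonempty)
  fix j assume "j \<in> J i"
  then show "0 < r i j / ln (1 + sinr g s2 x p i j)"
    using assms sinr_pos_served[of j i p x] by simp
qed

lemma load_f_full_load_average_power_le:
  assumes "\<And>k. 0 < p k" "\<And>k. 0 < x k" "x i \<le> 1" "\<And>j. j \<in> J i \<Longrightarrow> 0 < r i j"
  shows "load_f J g s2 (\<lambda>_. 1) r (\<lambda>k. x k * p k) i \<le> load_f J g s2 x r p i / x i"
  unfolding load_f_sinr sinr_full_load_average_power sum_divide_distrib
  using assms sinr_pos_served[OF _ assms(1) less_imp_le[OF assms(2)]]
  by (intro sum_mono divide_ln_one_plus_scaled_le) auto

lemma load_f_full_load_average_power_less:
  assumes "\<And>k. 0 < p k" "\<And>k. 0 < x k" "x i < 1" "\<And>j. j \<in> J i \<Longrightarrow> 0 < r i j"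
  shows "load_f J g s2 (\<lambda>_. 1) r (\<lambda>k. x k * p k) i < load_f J g s2 x r p i / x i"
  unfolding load_f_sinr sinr_full_load_average_power sum_divide_distrib
  using assms sinr_pos_served[OF _ assms(1) less_imp_le[OF assms(2)]]
  by (intro sum_strict_mono J_finite J_nonempty divide_ln_one_plus_scaled_less) auto

lemma load_f_scale_power_le:
  assumes "\<And>k. 0 < c k" "\<And>k. c k \<le> 1" "\<And>k. 0 < p k" "\<And>j. j \<in> J i \<Longrightarrow> 0 < r i j"
  shows "load_f J g s2 (\<lambda>_. 1) r (\<lambda>k. c k * p k) i \<le> load_f J g s2 (\<lambda>_. 1) r p i / c i"
proof -
  have "load_f J g s2 (\<lambda>_. 1) r (\<lambda>k. c k * p k) i
      \<le> (\<Sum>j\<in>J i. r i j / ln (1 + c i * sinr g s2 (\<lambda>_. 1) p i j))"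
    unfolding load_f_sinr
  proof (rule sum_mono)
    fix j assume j: "j \<in> J i"
    have "0 < c i * sinr g s2 (\<lambda>_. 1) p i j"
      using assms sinr_pos_served[OF j assms(3)] by simp
    moreover have "c i * sinr g s2 (\<lambda>_. 1) p i j \<le> sinr g s2 (\<lambda>_. 1) (\<lambda>k. c k * p k) i j"
      using assms g_pos[OF j] s2_pos by (intro sinr_scale_power_ge) (auto intro: less_imp_le)
    ultimately show "r i j / ln (1 + sinr g s2 (\<lambda>_. 1) (\<lambda>k. c k * p k) i j)
        \<le> r i j / ln (1 + c i * sinr g s2 (\<lambda>_. 1) p i j)"
      using assms(4)[OF j] by (intro divide_left_mono mult_pos_pos) auto
  qed
  also have "\<dots> \<le> load_f J g s2 (\<lambda>_. 1) r p i / c i"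
    unfolding load_f_sinr sum_divide_distrib
    using assms sinr_pos_served[OF _ assms(3)]
    by (intro sum_mono divide_ln_one_plus_scaled_le) auto
  finally show ?thesis .
qed

lemma P0_feasible_full_load:
  assumes p_pos: "\<And>k. 0 < p k" and r_pos: "\<And>i j. j \<in> J i \<Longrightarrow> 0 < r i j"
    and r_ge: "\<And>i j. j \<in> J i \<Longrightarrow> dmin i j \<le> r i j"
    and load_le: "\<And>i. load_f J g s2 (\<lambda>_. 1) r p i \<le> 1"
  defines "L \<equiv> load_f J g s2 (\<lambda>_. 1) r p"
  shows "P0_feasible J g s2 dmin p (\<lambda>i j. r i j / L i) (\<lambda>_. 1)"
proof -
  have L_pos: "0 < L i" for i
    unfolding L_def using p_pos r_pos by (intro load_f_pos) auto
  have "dmin i j \<le> r i j / L i" if "j \<in> J i" for i j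
  proof -
    have "r i j \<le> r i j / L i"
      using r_pos[OF that] L_pos[of i] load_le[of i]
      by (simp add: L_def le_divide_eq mult_left_le)
    then show ?thesis using r_ge[OF that] by linarith
  qed
  moreover have "load_f J g s2 (\<lambda>_. 1) (\<lambda>i j. r i j / L i) p i = 1" for i
    using L_pos[of i] by (simp add: load_f_scale_rates flip: L_def)
  ultimately show ?thesis
    unfolding P0_feasible_def using p_pos r_pos L_pos by simp
qed

lemma P0_feasible_improve:
  assumes feas: "P0_feasible J g s2 dmin p r x" and "x i\<^sub>0 < 1"
  shows "\<exists>p' r' x'. P0_feasible J g s2 dmin p' r' x' \<and> P0_objective x' p' < P0_objective x p"
proof -
  have p_pos: "\<And>k. 0 < p k" and r_pos: "\<And>i j. j \<in> J i \<Longrightarrow> 0 < r i j"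
    and x_pos: "\<And>i. 0 < x i" and x_le: "\<And>i. x i \<le> 1"
    and fixpoint: "\<And>i. load_f J g s2 x r p i = x i"
    and r_ge: "\<And>i j. j \<in> J i \<Longrightarrow> dmin i j \<le> r i j"
    using feas unfolding P0_feasible_def by auto
  define q where "q = (\<lambda>k. x k * p k)"
  define A where "A = load_f J g s2 (\<lambda>_. 1) r q"
  have q_pos: "0 < q k" for k using p_pos x_pos by (simp add: q_def)
  have A_pos: "0 < A i" for i
    unfolding A_def using q_pos r_pos by (intro load_f_pos) auto
  have A_le: "A i \<le> 1" for i
  proof -
    have "A i \<le> load_f J g s2 x r p i / x i"
      unfolding A_def q_def by (intro load_f_full_load_average_power_le p_pos x_pos x_le r_pos)
    then show ?thesis using fixpoint[of i] x_pos[of i] by simp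
  qed
  have A_less: "A i\<^sub>0 < 1"
  proof -
    have "A i\<^sub>0 < load_f J g s2 x r p i\<^sub>0 / x i\<^sub>0"
      unfolding A_def q_def
      by (intro load_f_full_load_average_power_less p_pos x_pos \<open>x i\<^sub>0 < 1\<close> r_pos)
    then show ?thesis using fixpoint[of i\<^sub>0] x_pos[of i\<^sub>0] by simp
  qed
  define p' where "p' = (\<lambda>k. A k * q k)"
  have "load_f J g s2 (\<lambda>_. 1) r p' i \<le> 1" for i
  proof -
    have "load_f J g s2 (\<lambda>_. 1) r p' i \<le> load_f J g s2 (\<lambda>_. 1) r q i / A i"
      unfolding p'_def by (intro load_f_scale_power_le A_pos A_le q_pos r_pos)
    then show ?thesis using A_pos[of i] by (simp add: A_def)
  qed
  moreover have "0 < p' k" for k using A_pos q_pos by (simp add: p'_def)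
  ultimately have "P0_feasible J g s2 dmin p'
      (\<lambda>i j. r i j / load_f J g s2 (\<lambda>_. 1) r p' i) (\<lambda>_. 1)"
    using r_pos r_ge by (intro P0_feasible_full_load)
  moreover have "P0_objective (\<lambda>_. 1) p' < P0_objective x p"
    unfolding P0_objective_def p'_def q_def
    using A_le A_less x_pos p_pos
    by (intro sum_strict_mono_ex1) (auto intro: mult_left_le_one_le mult_strict_right_mono)
  ultimately show ?thesis by blast
qed

end

theorem lemma2:
  fixes J :: "'n::finite \<Rightarrow> 'u set"
    and g :: "'n \<Rightarrow> 'u \<Rightarrow> real"
    and s2 :: real
    and dmin :: "'n \<Rightarrow> 'u \<Rightarrow> real"
    and p_opt x_opt :: "'n \<Rightarrow> real"
    and r_opt :: "'n \<Rightarrow> 'u \<Rightarrow> real"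
  assumes J_finite: "\<And>i. finite (J i)"
    and J_nonempty: "\<And>i. J i \<noteq> {}"
    and J_disjoint: "\<And>i i'. i \<noteq> i' \<Longrightarrow> J i \<inter> J i' = {}"
    and g_pos: "\<And>k i j. j \<in> J i \<Longrightarrow> g k j > 0"
    and s2_pos: "s2 > 0"
    and dmin_pos: "\<And>i j. j \<in> J i \<Longrightarrow> dmin i j > 0"
    and opt: "P0_optimal J g s2 dmin p_opt r_opt x_opt"
  shows "\<forall>i. x_opt i = 1"
proof (rule ccontr)
  interpret cellular_network J g s2
    using J_finite J_nonempty g_pos s2_pos by unfold_locales auto
  assume "\<not> (\<forall>i. x_opt i = 1)"
  moreover have "x_opt i \<le> 1" for i
    using opt unfolding P0_optimal_def P0_feasible_def by blast
  ultimately obtain i\<^sub>0 where "x_opt i\<^sub>0 < 1" by (meson order_le_less)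
  with opt obtain p' r' x' where "P0_feasible J g s2 dmin p' r' x'"
    and "P0_objective x' p' < P0_objective x_opt p_opt"
    unfolding P0_optimal_def using P0_feasible_improve by blast
  with opt show False unfolding P0_optimal_def by (meson not_le)
qed

end
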